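(* Let $(z,x)$ be a feasible solution of the cluster LP for vertex set $V$. Run the following cluster-based rounding: set $\mathcal C\gets\emptyset$, $V'\gets V$; while $V'\neq\emptyset$, choose a set $S$ at random with probability $z_S/\sum_{S'}z_{S'}$ (independently in each iteration), and if $V'\cap S\neq\emptyset$, add $V'\cap S$ to $\mathcal C$ and set $V'\gets V'\setminus S$; output $\mathcal C$. Then for every $uv\in\binom V2$, the probability that $u$ and $v$ are in different clusters of the output $\mathcal C$ is $\frac{2x_{uv}}{1+x_{uv}}$, and the probability that they are in the same cluster is $\frac{1-x_{uv}}{1+x_{uv}}$.
   Context: The cluster LP for a finite vertex set $V$ has a variable $z_S$ for every nonempty $S\subseteq V$ and $x_{uv}$ for every unordered pair $uv$ of distinct vertices, with constraints $\sum_{S\ni u}z_S=1$ for all $u\in V$, $\sum_{S\supseteq\{u,v\}}z_S=1-x_{uv}$ for all $uv$, and $z_S\ge0$. *)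

theory Defs
  imports "HOL-Probability.Probability"
begin

text \<open>The variable z_S (S a nonempty subset of V) is z S; the variable x_uv for the
  unordered pair uv is x {u,v}. Values of z outside nonempty subsets of V are irrelevant.\<close>

definition cluster_sets :: "'a set \<Rightarrow> 'a set set" where
  "cluster_sets V = {S. S \<subseteq> V \<and> S \<noteq> {}}"

definition cluster_lp_feasible :: "'a set \<Rightarrow> ('a set \<Rightarrow> real) \<Rightarrow> ('a set \<Rightarrow> real) \<Rightarrow> bool" where
  "cluster_lp_feasible V z x \<longleftrightarrow>
     (\<forall>u\<in>V. (\<Sum>S\<in>{S\<in>cluster_sets V. u \<in> S}. z S) = 1) \<and>
     (\<forall>u\<in>V. \<forall>v\<in>V. u \<noteq> v \<longrightarrow>
         (\<Sum>S\<in>{S\<in>cluster_sets V. {u, v} \<subseteq> S}. z S) = 1 - x {u, v}) \<and>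
     (\<forall>S\<in>cluster_sets V. z S \<ge> 0)"

definition rounding_pmf :: "'a set \<Rightarrow> ('a set \<Rightarrow> real) \<Rightarrow> 'a set pmf" where
  "rounding_pmf V z =
     embed_pmf (\<lambda>S. if S \<in> cluster_sets V then z S / (\<Sum>S'\<in>cluster_sets V. z S') else 0)"

text \<open>The independent draws of all iterations form an i.i.d. stream omega of sets
  (distributed according to the product measure). Before iteration i the remaining set is
  V' = V minus the union of the sets drawn in iterations < i; iteration i adds V' \<inter> omega!!i
  to the output if it is nonempty. Once V' is empty no further cluster is added, so the
  output of the algorithm is the following set of clusters.\<close>

definition remaining :: "'a set \<Rightarrow> 'a set stream \<Rightarrow> nat \<Rightarrow> 'a set" where
  "remaining V \<omega> i = V - (\<Union>j<i. \<omega> !! j)"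

definition rounding_output :: "'a set \<Rightarrow> 'a set stream \<Rightarrow> 'a set set" where
  "rounding_output V \<omega> = {remaining V \<omega> i \<inter> \<omega> !! i | i. remaining V \<omega> i \<inter> \<omega> !! i \<noteq> {}}"

definition rounding_space :: "'a set \<Rightarrow> ('a set \<Rightarrow> real) \<Rightarrow> 'a set stream measure" where
  "rounding_space V z = stream_space (measure_pmf (rounding_pmf V z))"

end

theory Submission
  imports Defs
begin

text \<open>A vertex w joins the cluster of the first draw that contains w. Hence u and v end up
  in the same cluster iff the first draw meeting {u, v} contains both of them. For i.i.d. draws
  and A \<subseteq> B, the first draw in B lies in A with probability h = P(A) / P(B), as conditioning
  on the first draw gives h = P(A) + (1 - P(B)) h. With Z the total LP mass, the feasibility
  constraints and inclusion-exclusion give P(S \<supseteq> {u, v}) = (1 - x_uv) / Z and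
  P(S \<inter> {u, v} \<noteq> {}) = (1 + x_uv) / Z. Since each vertex is almost surely covered
  by some draw, u and v are separated exactly when they are not together, up to a null set.\<close>

definition hit_before :: "'b set \<Rightarrow> 'b set \<Rightarrow> 'b stream set" where
  "hit_before A B = {\<omega>. \<exists>i. \<omega> !! i \<in> A \<and> (\<forall>j<i. \<omega> !! j \<notin> B)}"

lemma SCons_in_hit_before_iff:
  "x ## \<omega> \<in> hit_before A B \<longleftrightarrow> x \<in> A \<or> (x \<notin> B \<and> \<omega> \<in> hit_before A B)"
proof
  assume "x ## \<omega> \<in> hit_before A B"
  then obtain i where i: "(x ## \<omega>) !! i \<in> A" "\<forall>j<i. (x ## \<omega>) !! j \<notin> B"
    unfolding hit_before_def by blast
  show "x \<in> A \<or> (x \<notin> B \<and> \<omega> \<in> hit_before A B)"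
  proof (cases i)
    case (Suc k)
    have "x \<notin> B"
      using i(2) Suc by auto
    moreover have "\<omega> \<in> hit_before A B"
      unfolding hit_before_def using i Suc by (auto intro!: exI[of _ k])
    ultimately show ?thesis by blast
  qed (use i in simp)
next
  assume "x \<in> A \<or> (x \<notin> B \<and> \<omega> \<in> hit_before A B)"
  then show "x ## \<omega> \<in> hit_before A B"
  proof
    assume "x \<in> A"
    then show ?thesis unfolding hit_before_def by (intro CollectI exI[of _ 0]) simp
  next
    assume "x \<notin> B \<and> \<omega> \<in> hit_before A B"
    then obtain i where "x \<notin> B" "\<omega> !! i \<in> A" "\<forall>j<i. \<omega> !! j \<notin> B"
      unfolding hit_before_def by blast
    then show ?thesis
      unfolding hit_before_def by (intro CollectI exI[of _ "Suc i"]) (auto simp: less_Suc_eq_0_disj)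
  qed
qed

lemma hit_before_self: "hit_before A A = {\<omega>. \<exists>i. \<omega> !! i \<in> A}"
  unfolding hit_before_def using exists_least_iff[of "\<lambda>i. _ !! i \<in> A"] by auto

lemma sets_hit_before: "hit_before A B \<in> sets (stream_space (measure_pmf p))"
proof -
  have snth_in: "{\<omega>. \<omega> !! i \<in> X} \<in> sets (stream_space (measure_pmf p))" for i X
    using measurable_sets[OF measurable_snth, of X "measure_pmf p" i]
    by (simp add: space_stream_space vimage_def)
  have "hit_before A B = (\<Union>i. {\<omega>. \<omega> !! i \<in> A} - (\<Union>j<i. {\<omega>. \<omega> !! j \<in> B}))"
    unfolding hit_before_def by auto
  then show ?thesis
    using snth_in by (simp add: sets.countable_UN sets.Diff sets.finite_UN)
qed

lemma measure_hit_before: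
  assumes "A \<subseteq> B" and "measure_pmf.prob p B > 0"
  shows "measure (stream_space (measure_pmf p)) (hit_before A B)
           = measure_pmf.prob p A / measure_pmf.prob p B"
proof -
  let ?S = "stream_space (measure_pmf p)"
  let ?H = "hit_before A B"
  interpret S: prob_space ?S
    by (rule prob_space.prob_space_stream_space[OF prob_space_measure_pmf])
  have first_draw: "emeasure ?S {\<omega> \<in> space ?S. t ## \<omega> \<in> ?H}
      = indicator A t + indicator (- B) t * emeasure ?S ?H" for t
    using \<open>A \<subseteq> B\<close> S.emeasure_space_1
    by (auto simp: SCons_in_hit_before_iff space_stream_space split: split_indicator)
  have "emeasure ?S ?H = (\<integral>\<^sup>+t. emeasure ?S {\<omega> \<in> space ?S. t ## \<omega> \<in> ?H} \<partial>measure_pmf p)"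
    by (rule prob_space.emeasure_stream_space[OF prob_space_measure_pmf sets_hit_before])
  also have "\<dots> = emeasure (measure_pmf p) A + emeasure (measure_pmf p) (- B) * emeasure ?S ?H"
    unfolding first_draw by (subst nn_integral_add) (auto simp: nn_integral_multc)
  finally have "S.prob ?H = measure_pmf.prob p A + (1 - measure_pmf.prob p B) * S.prob ?H"
    using measure_pmf.prob_compl[of B p]
    by (simp add: S.emeasure_eq_measure measure_pmf.emeasure_eq_measure Compl_eq_Diff_UNIV
        ennreal_mult'[symmetric] ennreal_plus[symmetric] del: ennreal_plus)
  with \<open>measure_pmf.prob p B > 0\<close> show ?thesis
    by (simp add: field_simps)
qed

lemma AE_stream_hits:
  assumes "measure_pmf.prob p A > 0"
  shows "AE \<omega> in stream_space (measure_pmf p). \<exists>i. \<omega> !! i \<in> A"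
proof -
  interpret S: prob_space "stream_space (measure_pmf p)"
    by (rule prob_space.prob_space_stream_space[OF prob_space_measure_pmf])
  have "S.prob (hit_before A A) = 1"
    using measure_hit_before[OF order_refl assms] assms by simp
  then show ?thesis
    using S.AE_prob_1[of "hit_before A A"] by (simp add: hit_before_self)
qed

lemma finite_cluster_sets: "finite V \<Longrightarrow> finite (cluster_sets V)"
  unfolding cluster_sets_def by (rule finite_subset[of _ "Pow V"]) auto

lemma measure_rounding_pmf:
  assumes "finite V" and nonneg: "\<And>S. S \<in> cluster_sets V \<Longrightarrow> 0 \<le> z S"
    and pos: "0 < (\<Sum>S\<in>cluster_sets V. z S)"
  shows "measure_pmf.prob (rounding_pmf V z) X
           = (\<Sum>S\<in>{S \<in> cluster_sets V. S \<in> X}. z S) / (\<Sum>S\<in>cluster_sets V. z S)"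
proof -
  let ?Z = "\<Sum>S\<in>cluster_sets V. z S"
  define f where "f S = (if S \<in> cluster_sets V then z S / ?Z else 0)" for S
  have f_nonneg: "0 \<le> f S" for S
    using nonneg pos by (simp add: f_def)
  have "(\<integral>\<^sup>+S. ennreal (f S) \<partial>count_space UNIV) = (\<Sum>S\<in>cluster_sets V. ennreal (f S))"
    using finite_cluster_sets[OF \<open>finite V\<close>] by (intro nn_integral_count_space') (auto simp: f_def)
  also have "\<dots> = ennreal (\<Sum>S\<in>cluster_sets V. f S)"
    using f_nonneg by (simp add: sum_ennreal)
  also have "(\<Sum>S\<in>cluster_sets V. f S) = (\<Sum>S\<in>cluster_sets V. z S) / ?Z"
    by (simp add: f_def sum_divide_distrib[symmetric])
  finally have f_total: "(\<integral>\<^sup>+S. ennreal (f S) \<partial>count_space UNIV) = 1"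
    using pos by simp
  have pmf_eq: "pmf (rounding_pmf V z) S = f S" for S
    unfolding rounding_pmf_def f_def[symmetric] by (rule pmf_embed_pmf[OF f_nonneg f_total])
  then have "set_pmf (rounding_pmf V z) \<subseteq> cluster_sets V"
    by (auto simp: set_pmf_eq f_def)
  then have "measure_pmf.prob (rounding_pmf V z) X
      = measure_pmf.prob (rounding_pmf V z) (X \<inter> cluster_sets V)"
    by (metis measure_Int_set_pmf inf.absorb_iff2 inf_assoc inf_commute)
  also have "\<dots> = (\<Sum>S\<in>X \<inter> cluster_sets V. f S)"
    using finite_cluster_sets[OF \<open>finite V\<close>] by (simp add: measure_measure_pmf_finite pmf_eq)
  also have "\<dots> = (\<Sum>S\<in>{S \<in> cluster_sets V. S \<in> X}. z S) / ?Z"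
    unfolding sum_divide_distrib f_def by (intro sum.cong) auto
  finally show ?thesis .
qed

lemma cluster_lp_total_ge_1:
  assumes "finite V" "cluster_lp_feasible V z x" "u \<in> V"
  shows "1 \<le> (\<Sum>S\<in>cluster_sets V. z S)"
proof -
  have "(\<Sum>S\<in>{S \<in> cluster_sets V. u \<in> S}. z S) \<le> (\<Sum>S\<in>cluster_sets V. z S)"
    using assms finite_cluster_sets[OF \<open>finite V\<close>]
    by (intro sum_mono2) (auto simp: cluster_lp_feasible_def)
  with assms show ?thesis
    by (simp add: cluster_lp_feasible_def)
qed

lemma cluster_lp_x_nonneg:
  assumes "finite V" "cluster_lp_feasible V z x" "u \<in> V" "v \<in> V" "u \<noteq> v"
  shows "0 \<le> x {u, v}"
proof -
  have "(\<Sum>S\<in>{S \<in> cluster_sets V. {u, v} \<subseteq> S}. z S) \<le> (\<Sum>S\<in>{S \<in> cluster_sets V. u \<in> S}. z S)"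
    using assms finite_cluster_sets[OF \<open>finite V\<close>]
    by (intro sum_mono2) (auto simp: cluster_lp_feasible_def)
  with assms show ?thesis
    by (simp add: cluster_lp_feasible_def)
qed

lemma cluster_lp_sum_meeting_pair:
  assumes "finite V" "cluster_lp_feasible V z x" "u \<in> V" "v \<in> V" "u \<noteq> v"
  shows "(\<Sum>S\<in>{S \<in> cluster_sets V. u \<in> S \<or> v \<in> S}. z S) = 1 + x {u, v}"
proof -
  have "{S \<in> cluster_sets V. u \<in> S \<or> v \<in> S} = {S \<in> cluster_sets V. u \<in> S} \<union> {S \<in> cluster_sets V. v \<in> S}"
    and "{S \<in> cluster_sets V. u \<in> S} \<inter> {S \<in> cluster_sets V. v \<in> S} = {S \<in> cluster_sets V. {u, v} \<subseteq> S}"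
    by auto
  with assms show ?thesis
    using finite_cluster_sets[OF \<open>finite V\<close>]
    by (simp add: sum_Un cluster_lp_feasible_def)
qed

lemma rounding_output_disjoint:
  assumes "C1 \<in> rounding_output V \<omega>" "C2 \<in> rounding_output V \<omega>" "w \<in> C1" "w \<in> C2"
  shows "C1 = C2"
proof -
  obtain i k where C: "C1 = remaining V \<omega> i \<inter> \<omega> !! i" "C2 = remaining V \<omega> k \<inter> \<omega> !! k"
    using assms(1,2) unfolding rounding_output_def by blast
  have "\<not> i < k" "\<not> k < i"
    using assms(3,4) unfolding C remaining_def by auto
  then show ?thesis
    using C by simp
qed

lemma ex_rounding_output_mem:
  assumes "w \<in> V" "w \<in> \<omega> !! i"
  shows "\<exists>C\<in>rounding_output V \<omega>. w \<in> C"
proof -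
  obtain k where k: "w \<in> \<omega> !! k" "\<forall>j<k. w \<notin> \<omega> !! j"
    using assms(2) exists_least_iff[of "\<lambda>i. w \<in> \<omega> !! i"] by blast
  then have "w \<in> remaining V \<omega> k \<inter> \<omega> !! k"
    using assms(1) unfolding remaining_def by blast
  then show ?thesis
    unfolding rounding_output_def by auto
qed

lemma rounding_output_covered:
  "C \<in> rounding_output V \<omega> \<Longrightarrow> w \<in> C \<Longrightarrow> \<exists>i. w \<in> \<omega> !! i"
  unfolding rounding_output_def by blast

lemma same_cluster_iff_hit_before:
  assumes "u \<in> V" "v \<in> V"
  shows "(\<exists>C\<in>rounding_output V \<omega>. u \<in> C \<and> v \<in> C)
     \<longleftrightarrow> \<omega> \<in> hit_before {S. {u, v} \<subseteq> S} {S. u \<in> S \<or> v \<in> S}"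
proof
  assume "\<exists>C\<in>rounding_output V \<omega>. u \<in> C \<and> v \<in> C"
  then obtain i where "u \<in> remaining V \<omega> i \<inter> \<omega> !! i" "v \<in> remaining V \<omega> i \<inter> \<omega> !! i"
    unfolding rounding_output_def by blast
  then show "\<omega> \<in> hit_before {S. {u, v} \<subseteq> S} {S. u \<in> S \<or> v \<in> S}"
    unfolding hit_before_def remaining_def by blast
next
  assume "\<omega> \<in> hit_before {S. {u, v} \<subseteq> S} {S. u \<in> S \<or> v \<in> S}"
  then obtain i where "u \<in> remaining V \<omega> i \<inter> \<omega> !! i" "v \<in> remaining V \<omega> i \<inter> \<omega> !! i"
    using assms unfolding hit_before_def remaining_def by blast
  then show "\<exists>C\<in>rounding_output V \<omega>. u \<in> C \<and> v \<in> C"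
    unfolding rounding_output_def by blast
qed

lemma separated_iff_covered_not_same:
  assumes "u \<in> V" "v \<in> V"
  shows "(\<exists>C1\<in>rounding_output V \<omega>. \<exists>C2\<in>rounding_output V \<omega>. C1 \<noteq> C2 \<and> u \<in> C1 \<and> v \<in> C2)
     \<longleftrightarrow> (\<exists>i. u \<in> \<omega> !! i) \<and> (\<exists>i. v \<in> \<omega> !! i) \<and> \<not> (\<exists>C\<in>rounding_output V \<omega>. u \<in> C \<and> v \<in> C)" (is "?L \<longleftrightarrow> ?R")
proof
  assume "\<exists>C1\<in>rounding_output V \<omega>. \<exists>C2\<in>rounding_output V \<omega>. C1 \<noteq> C2 \<and> u \<in> C1 \<and> v \<in> C2"
  then obtain C1 C2 where C: "C1 \<in> rounding_output V \<omega>" "C2 \<in> rounding_output V \<omega>"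
      "C1 \<noteq> C2" "u \<in> C1" "v \<in> C2"
    by blast
  have "\<not> (\<exists>C\<in>rounding_output V \<omega>. u \<in> C \<and> v \<in> C)"
  proof
    assume "\<exists>C\<in>rounding_output V \<omega>. u \<in> C \<and> v \<in> C"
    then obtain C where "C \<in> rounding_output V \<omega>" "u \<in> C" "v \<in> C"
      by blast
    then have "C1 = C" "C2 = C"
      using rounding_output_disjoint[OF C(1)] rounding_output_disjoint[OF C(2)] C(4,5) by blast+
    with \<open>C1 \<noteq> C2\<close> show False
      by simp
  qed
  then show ?R
    using rounding_output_covered[OF C(1,4)] rounding_output_covered[OF C(2,5)] by blast
next
  assume ?R
  then obtain i k where "u \<in> \<omega> !! i" "v \<in> \<omega> !! k"
    by blast
  then obtain C1 C2 where C: "C1 \<in> rounding_output V \<omega>" "u \<in> C1" "C2 \<in> rounding_output V \<omega>" "v \<in> C2"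
    using ex_rounding_output_mem[OF assms(1)] ex_rounding_output_mem[OF assms(2)] by blast
  moreover have "C1 \<noteq> C2"
    using C \<open>?R\<close> by blast
  ultimately show ?L
    by blast
qed

lemma measure_rounding_pmf_feasible:
  assumes "finite V" "cluster_lp_feasible V z x" "u \<in> V"
  shows "measure_pmf.prob (rounding_pmf V z) X
           = (\<Sum>S\<in>{S \<in> cluster_sets V. S \<in> X}. z S) / (\<Sum>S\<in>cluster_sets V. z S)"
  using assms cluster_lp_total_ge_1[OF assms]
  by (intro measure_rounding_pmf) (auto simp: cluster_lp_feasible_def)

lemma AE_rounding_covers:
  assumes "finite V" "cluster_lp_feasible V z x" "w \<in> V"
  shows "AE \<omega> in rounding_space V z. \<exists>i. \<omega> !! i \<in> {S. w \<in> S}"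
  unfolding rounding_space_def using assms cluster_lp_total_ge_1[OF assms]
  by (intro AE_stream_hits) (simp add: measure_rounding_pmf_feasible[OF assms] cluster_lp_feasible_def)

lemma measure_rounding_same_cluster:
  assumes "finite V" "cluster_lp_feasible V z x" "u \<in> V" "v \<in> V" "u \<noteq> v"
  shows "measure (rounding_space V z) (hit_before {S. {u, v} \<subseteq> S} {S. u \<in> S \<or> v \<in> S})
           = (1 - x {u, v}) / (1 + x {u, v})"
proof -
  let ?p = "rounding_pmf V z" and ?Z = "\<Sum>S\<in>cluster_sets V. z S"
  have Z: "1 \<le> ?Z"
    by (rule cluster_lp_total_ge_1[OF assms(1-3)])
  have contains_pair: "measure_pmf.prob ?p {S. {u, v} \<subseteq> S} = (1 - x {u, v}) / ?Z"
    using assms unfolding measure_rounding_pmf_feasible[OF assms(1-3)] cluster_lp_feasible_def by simp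
  have meets_pair: "measure_pmf.prob ?p {S. u \<in> S \<or> v \<in> S} = (1 + x {u, v}) / ?Z"
    using cluster_lp_sum_meeting_pair[OF assms] by (simp add: measure_rounding_pmf_feasible[OF assms(1-3)])
  have "measure (rounding_space V z) (hit_before {S. {u, v} \<subseteq> S} {S. u \<in> S \<or> v \<in> S})
      = measure_pmf.prob ?p {S. {u, v} \<subseteq> S} / measure_pmf.prob ?p {S. u \<in> S \<or> v \<in> S}"
    unfolding rounding_space_def using Z cluster_lp_x_nonneg[OF assms]
    by (intro measure_hit_before) (auto simp: meets_pair)
  also have "\<dots> = (1 - x {u, v}) / (1 + x {u, v})"
    unfolding contains_pair meets_pair using Z by simp
  finally show ?thesis .
qed

theorem lemma1:
  fixes V :: "'a set" and z x :: "'a set \<Rightarrow> real" and u v :: 'a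
  assumes "finite V"
    and "cluster_lp_feasible V z x"
    and "u \<in> V" and "v \<in> V" and "u \<noteq> v"
  shows "measure (rounding_space V z)
           {\<omega> \<in> space (rounding_space V z).
              \<exists>C1\<in>rounding_output V \<omega>. \<exists>C2\<in>rounding_output V \<omega>.
                 C1 \<noteq> C2 \<and> u \<in> C1 \<and> v \<in> C2}
         = 2 * x {u, v} / (1 + x {u, v}) \<and>
         measure (rounding_space V z)
           {\<omega> \<in> space (rounding_space V z).
              \<exists>C\<in>rounding_output V \<omega>. u \<in> C \<and> v \<in> C}
         = (1 - x {u, v}) / (1 + x {u, v})"
proof -
  let ?same = "hit_before {S. {u, v} \<subseteq> S} {S. u \<in> S \<or> v \<in> S}"
  let ?covered = "\<lambda>w. hit_before {S. w \<in> S} {S. w \<in> S}"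
  interpret prob_space "rounding_space V z"
    unfolding rounding_space_def by (rule prob_space.prob_space_stream_space[OF prob_space_measure_pmf])
  have space: "space (rounding_space V z) = UNIV"
    by (simp add: rounding_space_def space_stream_space)
  have events: "hit_before A B \<in> events" for A B
    unfolding rounding_space_def by (rule sets_hit_before)
  have "{\<omega> \<in> space (rounding_space V z). \<exists>C1\<in>rounding_output V \<omega>. \<exists>C2\<in>rounding_output V \<omega>.
          C1 \<noteq> C2 \<and> u \<in> C1 \<and> v \<in> C2} = ?covered u \<inter> ?covered v - ?same"
    using separated_iff_covered_not_same[OF assms(3,4)] same_cluster_iff_hit_before[OF assms(3,4)]
    by (simp add: space hit_before_self set_eq_iff)
  also have "prob \<dots> = prob (space (rounding_space V z) - ?same)"
  proof (rule measure_eq_AE)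
    have "AE \<omega> in rounding_space V z. \<omega> \<in> ?covered u \<and> \<omega> \<in> ?covered v"
      using AE_rounding_covers[OF assms(1,2)] assms(3,4) by (simp add: hit_before_self AE_conj_iff)
    then show "AE \<omega> in rounding_space V z. \<omega> \<in> ?covered u \<inter> ?covered v - ?same
        \<longleftrightarrow> \<omega> \<in> space (rounding_space V z) - ?same"
      by eventually_elim (simp add: space)
  qed (use events in auto)
  also have "\<dots> = 2 * x {u, v} / (1 + x {u, v})"
    unfolding prob_compl[OF events] measure_rounding_same_cluster[OF assms]
    using cluster_lp_x_nonneg[OF assms] by (simp add: field_simps)
  finally show ?thesis
    using measure_rounding_same_cluster[OF assms] same_cluster_iff_hit_before[OF assms(3,4)]
    by (simp add: space)
qed

end
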